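(* $\mathfrak{ss}_{ac}=\mathfrak d$ and dually $\mathfrak{ss}_{ac}^\perp=\mathfrak b$.
   Context: Let $\mathfrak S$ be the set of all sequences $\mathbf a=\langle a_i:i\in\omega\rangle$ of rational numbers with $a_i\to 0$. Let $[\omega]^\omega_\omega$ denote the set of infinite coinfinite subsets of $\omega$. For infinite $X\subseteq\omega$ with increasing enumeration $\langle i_n\rangle$ write $\sum_X\mathbf a$ for $\sum_n a_{i_n}$. A series is convergent if its partial sums converge to a real number; it is conditional if $\sum_{\{i:a_i>0\}}\mathbf a=\infty$ and $\sum_{\{i:a_i<0\}}\mathbf a=-\infty$; conditionally convergent if convergent and conditional; absolutely convergent if convergent and not conditional. Let $\mathfrak S_{cc}$ be the set of $\mathbf a\in\mathfrak S$ with $\sum\mathbf a$ conditionally convergent. $\mathfrak{ss}_{ac}$ is the least cardinality of a family $\mathcal X\subseteq[\omega]^\omega_\omega$ such that for every $\mathbf a\in\mathfrak S_{cc}$ there is $X\in\mathcal X$ with $\sum_X\mathbf a$ absolutely convergent; $\mathfrak{ss}_{ac}^\perp$ is the least cardinality of a family $\mathcal A\subseteq\mathfrak S_{cc}$ such that no $X\in[\omega]^\omega_\omega$ makes $\sum_X\mathbf a$ absolutely convergent for all $\mathbf a\in\mathcal A$. $\mathfrak b$ and $\mathfrak d$ are the bounding and dominating numbers. *)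

theory Defs
  imports "HOL-Analysis.Analysis" "HOL-Library.Infinite_Set"
begin

definition Sseq :: "(nat \<Rightarrow> rat) set" where
  "Sseq = {a. (\<lambda>i. real_of_rat (a i)) \<longlonglongrightarrow> 0}"

definition infcoinf :: "nat set set" where
  "infcoinf = {X. infinite X \<and> infinite (- X)}"

definition subser :: "(nat \<Rightarrow> rat) \<Rightarrow> nat set \<Rightarrow> nat \<Rightarrow> real" where
  "subser a X = (\<lambda>n. real_of_rat (a (enumerate X n)))"

definition conditional :: "(nat \<Rightarrow> real) \<Rightarrow> bool" where
  "conditional b \<longleftrightarrow>
     filterlim (\<lambda>N. \<Sum>n<N. max (b n) 0) at_top sequentially \<and>
     filterlim (\<lambda>N. \<Sum>n<N. min (b n) 0) at_bot sequentially"

definition cond_conv :: "(nat \<Rightarrow> real) \<Rightarrow> bool" where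
  "cond_conv b \<longleftrightarrow> summable b \<and> conditional b"

definition abs_conv :: "(nat \<Rightarrow> real) \<Rightarrow> bool" where
  "abs_conv b \<longleftrightarrow> summable b \<and> \<not> conditional b"

definition Scc :: "(nat \<Rightarrow> rat) set" where
  "Scc = {a \<in> Sseq. cond_conv (\<lambda>i. real_of_rat (a i))}"

definition ss_ac_family :: "nat set set \<Rightarrow> bool" where
  "ss_ac_family \<X> \<longleftrightarrow> \<X> \<subseteq> infcoinf \<and>
     (\<forall>a\<in>Scc. \<exists>X\<in>\<X>. abs_conv (subser a X))"

definition ss_ac_perp_family :: "(nat \<Rightarrow> rat) set \<Rightarrow> bool" where
  "ss_ac_perp_family \<A> \<longleftrightarrow> \<A> \<subseteq> Scc \<and>
     \<not> (\<exists>X\<in>infcoinf. \<forall>a\<in>\<A>. abs_conv (subser a X))"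

definition unbounded_family :: "(nat \<Rightarrow> nat) set \<Rightarrow> bool" where
  "unbounded_family F \<longleftrightarrow> \<not> (\<exists>g. \<forall>f\<in>F. eventually (\<lambda>n. f n \<le> g n) sequentially)"

definition dominating_family :: "(nat \<Rightarrow> nat) set \<Rightarrow> bool" where
  "dominating_family D \<longleftrightarrow> (\<forall>g. \<exists>f\<in>D. eventually (\<lambda>n. g n \<le> f n) sequentially)"

text \<open>The least cardinality (as a cardinal, i.e. a well-order relation) of a
  set satisfying P.\<close>
definition mincard :: "('a set \<Rightarrow> bool) \<Rightarrow> 'a rel" where
  "mincard P = (SOME r. \<exists>F. P F \<and> r = card_of F \<and> (\<forall>G. P G \<longrightarrow> (r, card_of G) \<in> ordLeq))"

definition ss_ac :: "nat set rel" where "ss_ac = mincard ss_ac_family"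
definition ss_ac_perp :: "(nat \<Rightarrow> rat) rel" where "ss_ac_perp = mincard ss_ac_perp_family"
definition bnum :: "(nat \<Rightarrow> nat) rel" where "bnum = mincard unbounded_family"
definition dnum :: "(nat \<Rightarrow> nat) rel" where "dnum = mincard dominating_family"

end

theory Submission
  imports Defs
begin

text \<open>
  For \<open>a \<in> S\<close> let \<open>h\<^sub>a(n)\<close> be the least index from which on \<open>|a\<^sub>i| \<le> 2\<^sup>-\<^sup>n\<close>. If \<open>f\<close> eventually
  dominates \<open>h\<^sub>a\<close>, then along the infinite coinfinite set \<open>X\<^sub>f\<close> of the even numbers
  \<open>2(f(0) + \<dots> + f(n) + n)\<close>, whose \<open>n\<close>-th element exceeds \<open>f(n)\<close>, the subseries of \<open>a\<close> is
  dominated by \<open>2\<^sup>-\<^sup>n\<close> and hence absolutely convergent.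

  Conversely, for \<open>g : \<omega> \<rightarrow> \<omega>\<close> split \<open>\<omega>\<close> into consecutive blocks, the \<open>k\<close>-th of length
  about \<open>g(k)\<close>, and let \<open>a\<^sub>g\<close> be the alternating series with terms \<open>\<plusminus>1/(k+1)\<close> on the \<open>k\<close>-th
  block: it converges by Leibniz but not absolutely. Its absolute terms decrease, so if its
  subseries along \<open>X\<close> converges absolutely with sum \<open>T\<close>, then at most \<open>(n+1)T\<close> elements of
  \<open>X\<close> lie below the end of block \<open>n\<close>, which is at least \<open>g(n)\<close>. Hence \<open>n \<mapsto> X((n+1)\<^sup>2)\<close>
  eventually dominates \<open>g\<close>.

  The maps \<open>f \<mapsto> X\<^sub>f\<close>, \<open>X \<mapsto> (n \<mapsto> X((n+1)\<^sup>2))\<close>, \<open>g \<mapsto> a\<^sub>g\<close> and \<open>a \<mapsto> h\<^sub>a\<close> therefore carry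
  dominating families to \<open>ss\<^sub>a\<^sub>c\<close>-witnesses and back, and unbounded families to
  \<open>ss\<^sub>a\<^sub>c\<^sup>\<bottom>\<close>-witnesses and back, without increasing cardinality.
\<close>

lemma filterlim_sum_at_top_iff_not_summable:
  fixes h :: "nat \<Rightarrow> real"
  assumes nonneg: "\<And>n. 0 \<le> h n"
  shows "filterlim (\<lambda>N. \<Sum>n<N. h n) at_top sequentially \<longleftrightarrow> \<not> summable h"
proof
  assume "filterlim (\<lambda>N. \<Sum>n<N. h n) at_top sequentially"
  then show "\<not> summable h"
    unfolding summable_iff_convergent
    by (intro filterlim_at_infinity_imp_not_convergent filterlim_at_top_imp_at_infinity)
next
  assume not_summable: "\<not> summable h"
  show "filterlim (\<lambda>N. \<Sum>n<N. h n) at_top sequentially"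
    unfolding filterlim_at_top eventually_sequentially
  proof
    fix Z :: real
    obtain N0 where "Z \<le> (\<Sum>n<N0. h n)"
      using not_summable summableI_nonneg_bounded[of h Z] nonneg by (meson nle_le)
    moreover have "(\<Sum>n<N0. h n) \<le> (\<Sum>n<N. h n)" if "N0 \<le> N" for N
      using that nonneg by (intro sum_mono2) auto
    ultimately show "\<exists>N0. \<forall>N\<ge>N0. Z \<le> (\<Sum>n<N. h n)"
      by (meson order_trans)
  qed
qed

lemma conditional_iff_not_summable_abs:
  fixes b :: "nat \<Rightarrow> real"
  assumes "summable b"
  shows "conditional b \<longleftrightarrow> \<not> summable (\<lambda>n. \<bar>b n\<bar>)"
proof -
  have pos: "summable (\<lambda>n. max (b n) 0) \<longleftrightarrow> summable (\<lambda>n. \<bar>b n\<bar>)"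
  proof
    assume "summable (\<lambda>n. max (b n) 0)"
    then have "summable (\<lambda>n. 2 * max (b n) 0 - b n)"
      using assms by (intro summable_diff summable_mult)
    then show "summable (\<lambda>n. \<bar>b n\<bar>)"
      by (rule summable_cong[THEN iffD1, rotated]) (auto intro!: always_eventually)
  next
    assume "summable (\<lambda>n. \<bar>b n\<bar>)"
    then have "summable (\<lambda>n. (\<bar>b n\<bar> + b n) / 2)"
      using assms by (intro summable_divide summable_add)
    then show "summable (\<lambda>n. max (b n) 0)"
      by (rule summable_cong[THEN iffD1, rotated]) (auto intro!: always_eventually)
  qed
  have neg: "summable (\<lambda>n. - min (b n) 0) \<longleftrightarrow> summable (\<lambda>n. \<bar>b n\<bar>)"
  proof
    assume "summable (\<lambda>n. - min (b n) 0)"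
    then have "summable (\<lambda>n. 2 * - min (b n) 0 + b n)"
      using assms by (intro summable_add summable_mult)
    then show "summable (\<lambda>n. \<bar>b n\<bar>)"
      by (rule summable_cong[THEN iffD1, rotated]) (auto intro!: always_eventually)
  next
    assume "summable (\<lambda>n. \<bar>b n\<bar>)"
    then have "summable (\<lambda>n. (\<bar>b n\<bar> - b n) / 2)"
      using assms by (intro summable_divide summable_diff)
    then show "summable (\<lambda>n. - min (b n) 0)"
      by (rule summable_cong[THEN iffD1, rotated]) (auto intro!: always_eventually)
  qed
  have "filterlim (\<lambda>N. \<Sum>n<N. min (b n) 0) at_bot sequentially
      \<longleftrightarrow> filterlim (\<lambda>N. \<Sum>n<N. - min (b n) 0) at_top sequentially"
    by (simp add: sum_negf filterlim_uminus_at_bot)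
  with pos neg show ?thesis
    unfolding conditional_def
    by (simp add: filterlim_sum_at_top_iff_not_summable)
qed

lemma abs_conv_iff_summable_abs: "abs_conv b \<longleftrightarrow> summable (\<lambda>n. \<bar>b n\<bar>)"
  unfolding abs_conv_def
  using conditional_iff_not_summable_abs summable_rabs_cancel by metis

lemma cond_conv_iff: "cond_conv b \<longleftrightarrow> summable b \<and> \<not> summable (\<lambda>n. \<bar>b n\<bar>)"
  unfolding cond_conv_def using conditional_iff_not_summable_abs by metis

lemma cond_conv_alternating:
  fixes c :: "nat \<Rightarrow> real"
  assumes lim: "c \<longlonglongrightarrow> 0" and dec: "decseq c" and not_summable: "\<not> summable c"
  shows "cond_conv (\<lambda>n. (-1)^n * c n)"
proof -
  have nonneg: "0 \<le> c n" for n
    using decseq_ge[OF dec lim] .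
  have "summable (\<lambda>n. (-1)^n * c n)"
    using summable_Leibniz'(1)[OF lim nonneg] dec by (simp add: decseq_Suc_iff)
  moreover have "(\<lambda>n. \<bar>(-1)^n * c n\<bar>) = c"
    using nonneg by (simp add: abs_mult)
  ultimately show ?thesis
    using not_summable by (simp add: cond_conv_iff)
qed

lemma decseq_summable_mult_le_suminf:
  fixes d :: "nat \<Rightarrow> real"
  assumes dec: "decseq d" and nonneg: "\<And>n. 0 \<le> d n" and "summable d"
  shows "real (Suc m) * d m \<le> suminf d"
proof -
  have "real (Suc m) * d m = (\<Sum>n<Suc m. d m)"
    by simp
  also have "\<dots> \<le> (\<Sum>n<Suc m. d n)"
    using dec by (intro sum_mono) (simp add: decseq_def)
  also have "\<dots> \<le> suminf d"
    using assms by (intro sum_le_suminf) auto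
  finally show ?thesis .
qed

lemma enumerate_range_strict_mono:
  fixes F :: "nat \<Rightarrow> nat"
  assumes F: "strict_mono F"
  shows "enumerate (range F) n = F n"
proof (induction n)
  case 0
  show ?case
    unfolding enumerate_0 using F by (intro Least_equality) (auto simp: strict_mono_less_eq)
next
  case (Suc n)
  have "infinite (range F)"
    using F range_inj_infinite strict_mono_imp_inj_on by blast
  then have "enumerate (range F) (Suc n) = (LEAST s. s \<in> range F \<and> F n < s)"
    by (simp add: enumerate_Suc'' Suc.IH)
  also have "\<dots> = F (Suc n)"
    using F by (intro Least_equality) (auto simp: strict_mono_less strict_mono_less_eq Suc_le_eq)
  finally show ?case .
qed

lemma mincard_attained:
  assumes "P F"
  shows "\<exists>F. P F \<and> mincard P = card_of F \<and> (\<forall>G. P G \<longrightarrow> (mincard P, card_of G) \<in> ordLeq)"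
proof -
  obtain r where "r \<in> card_of ` Collect P" "\<forall>r'\<in>card_of ` Collect P. (r, r') \<in> ordLeq"
    using exists_minim_Well_order[of "card_of ` Collect P"] assms by (auto intro: card_of_Well_order)
  then have "\<exists>r F. P F \<and> r = card_of F \<and> (\<forall>G. P G \<longrightarrow> (r, card_of G) \<in> ordLeq)"
    by blast
  then show ?thesis
    unfolding mincard_def by (rule someI_ex)
qed

lemma mincard_ordLeq:
  assumes "P G"
  shows "(mincard P, card_of G) \<in> ordLeq"
  using mincard_attained[of P G] assms by blast

lemma mincard_ordLeq_image:
  assumes "P F" and image: "\<And>F. P F \<Longrightarrow> Q (h ` F)"
  shows "(mincard Q, mincard P) \<in> ordLeq"
proof -
  obtain F0 where F0: "P F0" "mincard P = card_of F0"
    using mincard_attained[of P F] \<open>P F\<close> by blast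
  have "(mincard Q, card_of (h ` F0)) \<in> ordLeq"
    using image[OF \<open>P F0\<close>] by (rule mincard_ordLeq)
  then show ?thesis
    unfolding F0(2) using card_of_image ordLeq_transitive by blast
qed

lemma mincard_ordIso_of_images:
  assumes "P F"
    and "\<And>F. P F \<Longrightarrow> Q (h ` F)" and "\<And>G. Q G \<Longrightarrow> P (k ` G)"
  shows "(mincard Q, mincard P) \<in> ordIso"
  using mincard_ordLeq_image[of P F Q h] mincard_ordLeq_image[of Q "h ` F" P k] assms
  by (simp add: ordIso_iff_ordLeq)

definition block_end :: "(nat \<Rightarrow> nat) \<Rightarrow> nat \<Rightarrow> nat" where
  "block_end g n = (\<Sum>k\<le>n. g k) + n"

lemma strict_mono_block_end: "strict_mono (block_end g)"
  unfolding strict_mono_Suc_iff block_end_def by simp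

lemma le_block_end: "g n \<le> block_end g n"
  unfolding block_end_def using member_le_sum[of n "{..n}" g] by simp

definition sparse_set :: "(nat \<Rightarrow> nat) \<Rightarrow> nat set" where
  "sparse_set f = range (\<lambda>n. 2 * block_end f n)"

lemma enumerate_sparse_set: "enumerate (sparse_set f) n = 2 * block_end f n"
  unfolding sparse_set_def
  by (rule enumerate_range_strict_mono) (use strict_mono_block_end in \<open>simp add: strict_mono_def\<close>)

lemma sparse_set_infcoinf: "sparse_set f \<in> infcoinf"
proof -
  have "strict_mono (\<lambda>n. 2 * block_end f n)"
    using strict_mono_block_end by (simp add: strict_mono_def)
  then have "infinite (sparse_set f)"
    unfolding sparse_set_def using range_inj_infinite strict_mono_imp_inj_on by blast
  moreover have "infinite (- sparse_set f)"
  proof -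
    have "range (\<lambda>n. 2 * n + 1) \<subseteq> - sparse_set f"
      unfolding sparse_set_def by auto presburger
    then show ?thesis
      using infinite_super range_inj_infinite[of "\<lambda>n::nat. 2 * n + 1"] by (auto simp: inj_on_def)
  qed
  ultimately show ?thesis
    unfolding infcoinf_def by blast
qed

definition tail_modulus :: "(nat \<Rightarrow> rat) \<Rightarrow> nat \<Rightarrow> nat" where
  "tail_modulus a n = (LEAST m. \<forall>i\<ge>m. \<bar>real_of_rat (a i)\<bar> \<le> (1/2)^n)"

lemma tail_modulus_bound:
  assumes "a \<in> Sseq" and "tail_modulus a n \<le> i"
  shows "\<bar>real_of_rat (a i)\<bar> \<le> (1/2)^n"
proof -
  have "\<exists>m. \<forall>i\<ge>m. \<bar>real_of_rat (a i)\<bar> \<le> (1/2)^n"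
    using assms(1) LIMSEQ_D[of "\<lambda>i. real_of_rat (a i)" 0 "(1/2)^n"]
    unfolding Sseq_def by (force intro: less_imp_le)
  from LeastI_ex[OF this] show ?thesis
    using assms(2) unfolding tail_modulus_def by blast
qed

lemma abs_conv_subser_sparse_set:
  assumes "a \<in> Sseq" and "\<forall>\<^sub>F n in sequentially. tail_modulus a n \<le> f n"
  shows "abs_conv (subser a (sparse_set f))"
  unfolding abs_conv_iff_summable_abs
proof (rule summable_comparison_test_ev)
  show "\<forall>\<^sub>F n in sequentially. norm \<bar>subser a (sparse_set f) n\<bar> \<le> (1/2)^n"
    using assms(2)
  proof eventually_elim
    case (elim n)
    then have "tail_modulus a n \<le> enumerate (sparse_set f) n"
      using le_block_end[of f n] by (simp add: enumerate_sparse_set)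
    then show ?case
      using tail_modulus_bound[OF assms(1)] by (simp add: subser_def)
  qed
  show "summable (\<lambda>n. (1/2::real)^n)"
    by (rule summable_geometric) simp
qed

lemma ss_ac_family_image_sparse_set:
  assumes "dominating_family D"
  shows "ss_ac_family (sparse_set ` D)"
  unfolding ss_ac_family_def
proof (intro conjI ballI)
  show "sparse_set ` D \<subseteq> infcoinf"
    using sparse_set_infcoinf by blast
  fix a assume "a \<in> Scc"
  then have "a \<in> Sseq"
    by (simp add: Scc_def)
  obtain f where "f \<in> D" "\<forall>\<^sub>F n in sequentially. tail_modulus a n \<le> f n"
    using assms unfolding dominating_family_def by blast
  then show "\<exists>X\<in>sparse_set ` D. abs_conv (subser a X)"
    using abs_conv_subser_sparse_set[OF \<open>a \<in> Sseq\<close>] by blast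
qed

lemma unbounded_family_image_tail_modulus:
  assumes "ss_ac_perp_family A"
  shows "unbounded_family (tail_modulus ` A)"
  unfolding unbounded_family_def
proof
  assume "\<exists>f. \<forall>h\<in>tail_modulus ` A. \<forall>\<^sub>F n in sequentially. h n \<le> f n"
  then obtain f where "\<forall>a\<in>A. \<forall>\<^sub>F n in sequentially. tail_modulus a n \<le> f n"
    by blast
  moreover have "A \<subseteq> Sseq"
    using assms unfolding ss_ac_perp_family_def Scc_def by blast
  ultimately have "\<forall>a\<in>A. abs_conv (subser a (sparse_set f))"
    using abs_conv_subser_sparse_set by blast
  then show False
    using assms sparse_set_infcoinf unfolding ss_ac_perp_family_def by blast
qed

definition block_index :: "(nat \<Rightarrow> nat) \<Rightarrow> nat \<Rightarrow> nat" where
  "block_index g i = (LEAST k. i < block_end g k)"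

lemma block_index_le: "i < block_end g n \<Longrightarrow> block_index g i \<le> n"
  unfolding block_index_def by (rule Least_le)

lemma less_block_end_block_index: "i < block_end g (block_index g i)"
proof -
  have "i < block_end g (Suc i)"
    using strict_mono_block_end[of g] seq_suble[of "block_end g" "Suc i"] by simp
  then show ?thesis
    unfolding block_index_def by (rule LeastI)
qed

lemma mono_block_index: "mono (block_index g)"
  by (rule monoI, rule block_index_le) (use less_block_end_block_index le_less_trans in blast)

lemma block_index_le_Suc: "block_index g i \<le> Suc i"
  using strict_mono_block_end[of g] seq_suble[of "block_end g" "Suc i"]
  by (intro block_index_le) simp

lemma filterlim_block_index_at_top: "filterlim (block_index g) at_top sequentially"
  unfolding filterlim_at_top eventually_sequentially
proof (intro allI exI impI)
  fix K i assume "block_end g K \<le> i"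
  then have "block_end g (block_index g i) > block_end g K"
    using less_block_end_block_index[of i g] by linarith
  then show "K \<le> block_index g i"
    using strict_mono_block_end strict_mono_less by (metis less_imp_le)
qed

definition block_weight :: "(nat \<Rightarrow> nat) \<Rightarrow> nat \<Rightarrow> real" where
  "block_weight g i = inverse (real (Suc (block_index g i)))"

definition block_series :: "(nat \<Rightarrow> nat) \<Rightarrow> nat \<Rightarrow> rat" where
  "block_series g i = (-1)^i * inverse (of_nat (Suc (block_index g i)))"

lemma real_of_rat_block_series: "real_of_rat (block_series g i) = (-1)^i * block_weight g i"
  unfolding block_series_def block_weight_def
  by (simp add: of_rat_mult of_rat_inverse of_rat_power of_rat_add)

lemma block_weight_nonneg: "0 \<le> block_weight g i"
  by (simp add: block_weight_def)

lemma decseq_block_weight: "decseq (block_weight g)"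
  unfolding decseq_def block_weight_def
  using mono_block_index[of g] by (simp add: monoD le_imp_inverse_le)

lemma block_weight_lower: "i < block_end g n \<Longrightarrow> inverse (real (Suc n)) \<le> block_weight g i"
  unfolding block_weight_def using block_index_le[of i g n] by (simp add: le_imp_inverse_le)

lemma not_summable_block_weight: "\<not> summable (block_weight g)"
proof
  assume "summable (block_weight g)"
  then have "summable (\<lambda>i. inverse (real (Suc (Suc i))))"
  proof (rule summable_comparison_test'[where N = 0])
    show "norm (inverse (real (Suc (Suc i)))) \<le> block_weight g i" for i
      using block_index_le_Suc[of g i] by (simp add: block_weight_def le_imp_inverse_le)
  qed
  then have "summable (\<lambda>n. inverse (real n))"
    using summable_iff_shift[of "\<lambda>n. inverse (real n)" 2] by (simp add: numeral_2_eq_2)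
  then show False
    using not_summable_harmonic by blast
qed

lemma block_series_Scc: "block_series g \<in> Scc"
proof -
  have lim: "block_weight g \<longlonglongrightarrow> 0"
    unfolding block_weight_def
    using filterlim_compose[OF LIMSEQ_inverse_real_of_nat filterlim_block_index_at_top] .
  have "cond_conv (\<lambda>i. (-1)^i * block_weight g i)"
    using cond_conv_alternating[OF lim decseq_block_weight not_summable_block_weight] .
  moreover have "(\<lambda>i. (-1)^i * block_weight g i) \<longlonglongrightarrow> 0"
    using calculation summable_LIMSEQ_zero unfolding cond_conv_def by blast
  ultimately show ?thesis
    by (simp add: Scc_def Sseq_def real_of_rat_block_series)
qed

definition enum_squares :: "nat set \<Rightarrow> nat \<Rightarrow> nat" where
  "enum_squares X n = enumerate X (Suc n * Suc n)"

lemma eventually_le_enum_squares: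
  assumes X: "infinite X" and "abs_conv (subser (block_series g) X)"
  shows "\<forall>\<^sub>F n in sequentially. g n \<le> enum_squares X n"
proof -
  define d where "d = (\<lambda>m. block_weight g (enumerate X m))"
  have "decseq d"
    using decseq_block_weight[of g] X unfolding d_def decseq_def by simp
  moreover have "0 \<le> d m" for m
    by (simp add: d_def block_weight_nonneg)
  moreover have "summable d"
    using assms(2) unfolding abs_conv_iff_summable_abs
    by (simp add: subser_def real_of_rat_block_series abs_mult block_weight_nonneg d_def)
  ultimately have bound: "real (Suc m) * d m \<le> suminf d" for m
    by (rule decseq_summable_mult_le_suminf)
  obtain n0 :: nat where n0: "suminf d < real n0"
    using reals_Archimedean2 by blast
  have "g n \<le> enum_squares X n" if "n0 \<le> n" for n
  proof (rule ccontr)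
    let ?m = "Suc n * Suc n"
    assume "\<not> g n \<le> enum_squares X n"
    then have "enumerate X ?m < block_end g n"
      using le_block_end[of g n] unfolding enum_squares_def by linarith
    then have "inverse (real (Suc n)) \<le> d ?m"
      unfolding d_def by (rule block_weight_lower)
    then have "real (Suc ?m) * inverse (real (Suc n)) \<le> suminf d"
      using bound[of ?m] by (meson mult_left_mono of_nat_0_le_iff order_trans)
    moreover have "real (Suc n) < real (Suc ?m) * inverse (real (Suc n))"
      by (simp add: field_simps)
    ultimately show False
      using n0 that by linarith
  qed
  then show ?thesis
    unfolding eventually_sequentially by blast
qed

lemma dominating_family_image_enum_squares:
  assumes "ss_ac_family XX"
  shows "dominating_family (enum_squares ` XX)"
  unfolding dominating_family_def
proof
  fix g
  obtain X where "X \<in> XX" "abs_conv (subser (block_series g) X)"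
    using assms block_series_Scc unfolding ss_ac_family_def by blast
  moreover have "infinite X"
    using assms \<open>X \<in> XX\<close> unfolding ss_ac_family_def infcoinf_def by blast
  ultimately show "\<exists>f\<in>enum_squares ` XX. \<forall>\<^sub>F n in sequentially. g n \<le> f n"
    using eventually_le_enum_squares by blast
qed

lemma ss_ac_perp_family_image_block_series:
  assumes "unbounded_family F"
  shows "ss_ac_perp_family (block_series ` F)"
  unfolding ss_ac_perp_family_def
proof (intro conjI notI)
  show "block_series ` F \<subseteq> Scc"
    using block_series_Scc by blast
  assume "\<exists>X\<in>infcoinf. \<forall>a\<in>block_series ` F. abs_conv (subser a X)"
  then obtain X where "infinite X" "\<forall>g\<in>F. abs_conv (subser (block_series g) X)"
    unfolding infcoinf_def by blast
  then have "\<forall>g\<in>F. \<forall>\<^sub>F n in sequentially. g n \<le> enum_squares X n"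
    using eventually_le_enum_squares by blast
  with assms show False
    unfolding unbounded_family_def by blast
qed

lemma dominating_family_UNIV: "dominating_family UNIV"
  unfolding dominating_family_def by (metis UNIV_I always_eventually order_refl)

lemma unbounded_family_UNIV: "unbounded_family UNIV"
  unfolding unbounded_family_def not_ex
proof (intro allI notI)
  fix g :: "nat \<Rightarrow> nat"
  assume g: "\<forall>f\<in>UNIV. \<forall>\<^sub>F n in sequentially. f n \<le> g n"
  have "\<forall>\<^sub>F n in sequentially. Suc (g n) \<le> g n"
    using g[rule_format, of "\<lambda>n. Suc (g n)"] by simp
  then show False
    by (simp add: eventually_sequentially)
qed

theorem mainTheorem6:
  shows "(ss_ac, dnum) \<in> ordIso \<and> (ss_ac_perp, bnum) \<in> ordIso"
proof
  show "(ss_ac, dnum) \<in> ordIso"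
    unfolding ss_ac_def dnum_def
    using dominating_family_UNIV ss_ac_family_image_sparse_set dominating_family_image_enum_squares
    by (rule mincard_ordIso_of_images)
  show "(ss_ac_perp, bnum) \<in> ordIso"
    unfolding ss_ac_perp_def bnum_def
    using unbounded_family_UNIV ss_ac_perp_family_image_block_series
      unbounded_family_image_tail_modulus
    by (rule mincard_ordIso_of_images)
qed

end
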